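(* Let $V,W$ be complex vector spaces of dimension $n+1$ and let $f:\mathbb{P}(V)\to\mathbb{P}(W)$ be a morphism given in coordinates by $y_j=f_j(x)=\sum_{|I|=m}a_{j,I}x^I$, $j=0,\dots,n$, homogeneous of degree $m$ with no common zero other than the origin. Suppose that for integer vectors $c=(c_0,\dots,c_n)$, $b=(b_0,\dots,b_n)$ and a constant $C$ one has $\langle c,I\rangle-b_j=C$ whenever $a_{j,I}\neq0$ (equivalently, $g_{b,c}(\lambda)=(\mathrm{diag}(\lambda^{c_i}),\mathrm{diag}(\lambda^{b_i}))$ stabilizes $f$ in $PGL(V)\times PGL(W)$), and let $\Pi_j=\{I\in\mathbb{R}^{n+1}:\langle c,I\rangle-b_j=C\}$. Then every vertex of $\Delta$ is contained in one of the hyperplanes $\Pi_j$.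
   Context: $x^I=x_0^{i_0}\cdots x_n^{i_n}$, $|I|=\sum i_k$, $\langle c,I\rangle=\sum c_ki_k$. $\Delta\subset\mathbb{R}^{n+1}$ is the simplex with vertices $p_i=m e_i$, $i=0,\dots,n$, where $e_i$ are the standard basis vectors. *)

theory Defs
  imports Complex_Main
begin

definition multi_idx :: "nat \<Rightarrow> nat \<Rightarrow> (nat \<Rightarrow> nat) set" where
  "multi_idx n m = {I. (\<forall>k>n. I k = 0) \<and> (\<Sum>k\<le>n. I k) = m}"

definition xpow :: "nat \<Rightarrow> (nat \<Rightarrow> nat) \<Rightarrow> (nat \<Rightarrow> complex) \<Rightarrow> complex" where
  "xpow n I x = (\<Prod>k\<le>n. x k ^ I k)"

definition fcomp :: "nat \<Rightarrow> nat \<Rightarrow> (nat \<Rightarrow> (nat \<Rightarrow> nat) \<Rightarrow> complex) \<Rightarrow> nat \<Rightarrow> (nat \<Rightarrow> complex) \<Rightarrow> complex" where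
  "fcomp n m a j x = (\<Sum>I\<in>multi_idx n m. a j I * xpow n I x)"

text \<open>Vertex p_i = m e_i of the simplex Delta, as a point of R^{n+1} (coordinates 0..n).\<close>
definition vertex :: "nat \<Rightarrow> nat \<Rightarrow> (nat \<Rightarrow> real)" where
  "vertex m i = (\<lambda>k. if k = i then real m else 0)"

definition hyperplane :: "nat \<Rightarrow> (nat \<Rightarrow> int) \<Rightarrow> (nat \<Rightarrow> int) \<Rightarrow> int \<Rightarrow> nat \<Rightarrow> (nat \<Rightarrow> real) set" where
  "hyperplane n c b C j = {I. (\<Sum>k\<le>n. real_of_int (c k) * I k) - real_of_int (b j) = real_of_int C}"

end

theory Submission
  imports Defs
begin

text \<open>Evaluating f at the coordinate point e_i picks out the coefficient of the pure power
  x_i^m, since every other monomial of degree m contains a variable x_k with k \<noteq> i.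
  By the absence of common zeros some f_j is nonzero at e_i, so a_{j, m e_i} \<noteq> 0, and the
  stabilizer condition for this monomial says exactly that the vertex p_i = m e_i lies on \<Pi>_j.\<close>

definition pure_power_idx :: "nat \<Rightarrow> nat \<Rightarrow> (nat \<Rightarrow> nat)" where
  "pure_power_idx m i = (\<lambda>k. if k = i then m else 0)"

definition unit_point :: "nat \<Rightarrow> (nat \<Rightarrow> complex)" where
  "unit_point i = (\<lambda>k. if k = i then 1 else 0)"

lemma finite_multi_idx: "finite (multi_idx n m)"
proof (rule finite_subset)
  show "multi_idx n m \<subseteq> {f. \<forall>x. (x \<in> {..n} \<longrightarrow> f x \<in> {..m}) \<and> (x \<notin> {..n} \<longrightarrow> f x = 0)}"
  proof
    fix I assume I: "I \<in> multi_idx n m"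
    have "I x \<le> m" if "x \<le> n" for x
    proof -
      have "I x \<le> (\<Sum>k\<le>n. I k)" using that by (intro member_le_sum) auto
      thus ?thesis using I unfolding multi_idx_def by simp
    qed
    thus "I \<in> {f. \<forall>x. (x \<in> {..n} \<longrightarrow> f x \<in> {..m}) \<and> (x \<notin> {..n} \<longrightarrow> f x = 0)}"
      using I unfolding multi_idx_def by auto
  qed
  show "finite {f. \<forall>x. (x \<in> {..n} \<longrightarrow> f x \<in> {..m}) \<and> (x \<notin> {..n} \<longrightarrow> f x = (0::nat))}"
    by (rule finite_set_of_finite_funs) auto
qed

lemma pure_power_idx_in_multi_idx:
  assumes "i \<le> n"
  shows "pure_power_idx m i \<in> multi_idx n m"
  using assms unfolding multi_idx_def pure_power_idx_def by auto

lemma multi_idx_supported_at_point_eq_pure_power: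
  assumes i: "i \<le> n" and I: "I \<in> multi_idx n m"
    and supp: "\<forall>k\<le>n. k \<noteq> i \<longrightarrow> I k = 0"
  shows "I = pure_power_idx m i"
proof -
  have zero: "I k = 0" if "k \<noteq> i" for k
    using supp I that unfolding multi_idx_def by (cases "k \<le> n") auto
  have "m = (\<Sum>k\<le>n. I k)" using I unfolding multi_idx_def by simp
  also have "\<dots> = (\<Sum>k\<le>n. if k = i then I i else 0)"
    by (rule sum.cong) (auto simp: zero)
  also have "\<dots> = I i" using i by simp
  finally show ?thesis using zero unfolding pure_power_idx_def by auto
qed

lemma xpow_unit_point:
  assumes i: "i \<le> n" and I: "I \<in> multi_idx n m"
  shows "xpow n I (unit_point i) = (if I = pure_power_idx m i then 1 else 0)"
proof (cases "I = pure_power_idx m i")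
  case True
  then show ?thesis
    unfolding xpow_def unit_point_def pure_power_idx_def by (auto intro: prod.neutral)
next
  case False
  then obtain k where "k \<le> n" "k \<noteq> i" "I k \<noteq> 0"
    using multi_idx_supported_at_point_eq_pure_power[OF i I] by blast
  then have "xpow n I (unit_point i) = 0"
    unfolding xpow_def unit_point_def by (intro prod_zero) auto
  with False show ?thesis by simp
qed

lemma fcomp_unit_point:
  assumes "i \<le> n"
  shows "fcomp n m a j (unit_point i) = a j (pure_power_idx m i)"
proof -
  have "fcomp n m a j (unit_point i)
      = (\<Sum>I\<in>multi_idx n m. if I = pure_power_idx m i then a j I else 0)"
    unfolding fcomp_def by (rule sum.cong) (auto simp: xpow_unit_point[OF assms])
  also have "\<dots> = a j (pure_power_idx m i)"
    using pure_power_idx_in_multi_idx[OF assms] finite_multi_idx by (simp add: sum.delta')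
  finally show ?thesis .
qed

lemma vertex_in_hyperplane_iff:
  assumes "i \<le> n"
  shows "vertex m i \<in> hyperplane n c b C j
    \<longleftrightarrow> (\<Sum>k\<le>n. c k * int (pure_power_idx m i k)) - b j = C"
proof -
  have lhs: "(\<Sum>k\<le>n. real_of_int (c k) * vertex m i k) = real_of_int (c i) * real m"
    using assms unfolding vertex_def by (simp add: if_distrib cong: if_cong)
  have rhs: "(\<Sum>k\<le>n. c k * int (pure_power_idx m i k)) = c i * int m"
    using assms unfolding pure_power_idx_def by (simp add: if_distrib cong: if_cong)
  have "real_of_int (c i) * real m - real_of_int (b j) = real_of_int C
      \<longleftrightarrow> c i * int m - b j = C"
    by (metis of_int_diff of_int_eq_iff of_int_mult of_int_of_nat_eq)
  then show ?thesis unfolding hyperplane_def mem_Collect_eq lhs rhs .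
qed

theorem mainTheorem4:
  fixes n m :: nat
    and a :: "nat \<Rightarrow> (nat \<Rightarrow> nat) \<Rightarrow> complex"
    and c b :: "nat \<Rightarrow> int" and C :: int
  assumes no_common_zero:
    "\<And>x :: nat \<Rightarrow> complex. (\<forall>j\<le>n. fcomp n m a j x = 0) \<Longrightarrow> (\<forall>k\<le>n. x k = 0)"
  assumes stab:
    "\<And>j I. j \<le> n \<Longrightarrow> I \<in> multi_idx n m \<Longrightarrow> a j I \<noteq> 0 \<Longrightarrow>
       (\<Sum>k\<le>n. c k * int (I k)) - b j = C"
  shows "\<forall>i\<le>n. \<exists>j\<le>n. vertex m i \<in> hyperplane n c b C j"
proof (intro allI impI)
  fix i assume i: "i \<le> n"
  have "\<not> (\<forall>k\<le>n. unit_point i k = 0)" using i unfolding unit_point_def by auto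
  then obtain j where j: "j \<le> n" "fcomp n m a j (unit_point i) \<noteq> 0"
    using no_common_zero by blast
  then have "a j (pure_power_idx m i) \<noteq> 0" using fcomp_unit_point[OF i] by simp
  then have "(\<Sum>k\<le>n. c k * int (pure_power_idx m i k)) - b j = C"
    using stab j(1) pure_power_idx_in_multi_idx[OF i] by blast
  then show "\<exists>j\<le>n. vertex m i \<in> hyperplane n c b C j"
    using j(1) vertex_in_hyperplane_iff[OF i] by blast
qed

end
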